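(* Let $\mathbb{K}$ be a field, $G=\operatorname{SL}_2(\mathbb{K})$, and $V$ a $G$-module of length $n$. Then the subgroup $\langle G\cdot (Z_1(V) \cap w\cdot Z_{n-1}(V))\rangle$ of $V$ generated by the $G$-translates of $Z_1(V) \cap w\cdot Z_{n-1}(V)$ has length at most $n-1$ (indeed it is contained in $Z_{n-1}(V)$).
   Context: $G = \operatorname{SL}_2(\mathbb{K})$ is regarded as an abstract group and a $G$-module is a $\mathbb{Z}[G]$-module. Let $w = \begin{pmatrix}0 & 1 \\ -1 & 0 \end{pmatrix}$ and $U = \left\{\begin{pmatrix}1 & \lambda \\ 0 & 1\end{pmatrix}:\lambda\in\mathbb{K}\right\}$. For a $G$-module $V$ set $Z_0(V) = 0$ and define $Z_{k+1}(V)$ by $Z_{k+1}(V)/Z_k(V) = C_{V/Z_k(V)}(U)$ (the fixed points of $U$ in the quotient). The length of $V$ (or of a $U$-invariant subgroup) is the least $k$ with $Z_k = $ the whole module, i.e. the least $k$ such that $k$-fold iterated commutators with $U$ vanish. *)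

theory Defs
  imports "HOL-Analysis.Analysis"
begin

definition mat2 :: "'k::field \<Rightarrow> 'k \<Rightarrow> 'k \<Rightarrow> 'k \<Rightarrow> 'k^2^2" where
  "mat2 a b c d = vector [vector [a, b], vector [c, d]]"

definition SL2 :: "('k::field^2^2) set" where
  "SL2 = {A. det A = 1}"

definition wmat :: "'k::field^2^2" where
  "wmat = mat2 0 1 (-1) 0"

definition Ugrp :: "('k::field^2^2) set" where
  "Ugrp = {mat2 1 l 0 1 | l. True}"

text \<open>A G-module (Z[G]-module) structure on an abelian group 'v: a group action of
  SL_2(K) (as an abstract group) by additive maps.\<close>
definition SL2_module :: "('k::field^2^2 \<Rightarrow> 'v::ab_group_add \<Rightarrow> 'v) \<Rightarrow> bool" where
  "SL2_module act \<longleftrightarrow>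
     (\<forall>g\<in>SL2. \<forall>x y. act g (x + y) = act g x + act g y) \<and>
     (\<forall>x. act (mat 1) x = x) \<and>
     (\<forall>g\<in>SL2. \<forall>h\<in>SL2. \<forall>x. act (g ** h) x = act g (act h x))"

text \<open>Z_k(M) for a U-invariant subgroup M: Z_0 = 0, and Z_{k+1}/Z_k = C_{M/Z_k}(U).\<close>
fun Zser :: "('k::field^2^2 \<Rightarrow> 'v::ab_group_add \<Rightarrow> 'v) \<Rightarrow> 'v set \<Rightarrow> nat \<Rightarrow> 'v set" where
  "Zser act M 0 = {0}"
| "Zser act M (Suc k) = {x \<in> M. \<forall>u\<in>Ugrp. act u x - x \<in> Zser act M k}"

definition gen_subgroup :: "'v::ab_group_add set \<Rightarrow> 'v set" where
  "gen_subgroup S = \<Inter>{H. 0 \<in> H \<and> (\<forall>x\<in>H. \<forall>y\<in>H. x - y \<in> H) \<and> S \<subseteq> H}"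

end

theory Submission imports Defs begin

text \<open>Every element of SL_2 is either upper triangular or of the form u w t u' with u, u' in U
  and t diagonal (Bruhat decomposition). Upper triangular matrices normalise U and hence preserve
  every Z_k(V). An element x of Z_1(V) is fixed by U, and if x = w y with y in Z_m(V), then
  u w t u' x = u (w w) t' y with t' = w^-1 t w diagonal and w w = -1, which lies in Z_m(V) again.
  So the G-translates of Z_1(V) \<inter> w Z_m(V) generate a G-invariant subgroup W of Z_m(V), and for
  a U-invariant subgroup the series Z_k(W) is just W \<inter> Z_k(V).\<close>

lemma mat2_nth:
  "mat2 a b c d $ 1 $ 1 = a" "mat2 a b c d $ 1 $ 2 = b"
  "mat2 a b c d $ 2 $ 1 = c" "mat2 a b c d $ 2 $ 2 = d"
  by (simp_all add: mat2_def)

lemma mat2_eq_iff: "mat2 a b c d = mat2 a' b' c' d' \<longleftrightarrow> a = a' \<and> b = b' \<and> c = c' \<and> d = d'"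
  by (auto simp: vec_eq_iff forall_2 mat2_nth)

lemma mat2_mult:
  "mat2 a b c d ** mat2 e f g h = mat2 (a*e + b*g) (a*f + b*h) (c*e + d*g) (c*f + d*h)"
  by (simp add: vec_eq_iff forall_2 mat2_nth matrix_matrix_mult_def sum_2)

lemma mat2_entries: "(A::'k::field^2^2) = mat2 (A$1$1) (A$1$2) (A$2$1) (A$2$2)"
  by (simp add: vec_eq_iff forall_2 mat2_nth)

lemma mat2_in_SL2_iff: "mat2 a b c d \<in> SL2 \<longleftrightarrow> a*d - b*c = 1"
  by (simp add: SL2_def det_2 mat2_nth)

lemma SL2_mult: "g \<in> SL2 \<Longrightarrow> h \<in> SL2 \<Longrightarrow> g ** h \<in> SL2"
  by (simp add: SL2_def det_mul)

lemma upper_triangular_in_SL2: "a \<noteq> 0 \<Longrightarrow> mat2 a b 0 (inverse a) \<in> SL2"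
  by (simp add: mat2_in_SL2_iff)

lemma wmat_in_SL2: "wmat \<in> SL2"
  by (simp add: wmat_def mat2_in_SL2_iff)

lemma Ugrp_subset_SL2: "u \<in> Ugrp \<Longrightarrow> u \<in> SL2"
  by (auto simp: Ugrp_def mat2_in_SL2_iff)

lemma upper_triangular_normalizes_Ugrp:
  assumes "a \<noteq> 0" and "u \<in> Ugrp"
  shows "\<exists>u'\<in>Ugrp. u ** mat2 a b 0 (inverse a) = mat2 a b 0 (inverse a) ** u'"
proof -
  obtain l where u: "u = mat2 1 l 0 1" using assms(2) by (auto simp: Ugrp_def)
  have "u ** mat2 a b 0 (inverse a) = mat2 a b 0 (inverse a) ** mat2 1 (l / a^2) 0 1"
    using assms(1) by (simp add: u mat2_mult mat2_eq_iff field_simps power2_eq_square)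
  moreover have "mat2 1 (l / a^2) 0 1 \<in> Ugrp" by (auto simp: Ugrp_def)
  ultimately show ?thesis by blast
qed

lemma wmat_mult_diag:
  "a \<noteq> 0 \<Longrightarrow> mat2 a 0 0 (inverse a) ** wmat = wmat ** mat2 (inverse a) 0 0 (inverse (inverse a))"
  by (simp add: wmat_def mat2_mult mat2_eq_iff)

lemma wmat_squared: "wmat ** wmat = mat2 (-1) 0 0 (inverse (-1))"
  by (simp add: wmat_def mat2_mult mat2_eq_iff)

lemma SL2_Bruhat_cases:
  assumes "g \<in> SL2"
  obtains a b where "a \<noteq> 0" "g = mat2 a b 0 (inverse a)"
  | a l l' where "a \<noteq> 0" "g = mat2 1 l 0 1 ** (wmat ** (mat2 a 0 0 (inverse a) ** mat2 1 l' 0 1))"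
proof -
  define p q r s where "p = g$1$1" "q = g$1$2" "r = g$2$1" "s = g$2$2"
  have g: "g = mat2 p q r s" unfolding p_q_r_s_def by (rule mat2_entries)
  have det: "p * s - q * r = 1" using assms g mat2_in_SL2_iff by metis
  show thesis
  proof (cases "r = 0")
    case True
    then have "p * s = 1" using det by simp
    then have "p \<noteq> 0" "s = inverse p" by (auto simp: mult.commute inverse_unique)
    then show thesis using that(1) g True by blast
  next
    case False
    have "g = mat2 1 (p/r) 0 1 ** (wmat ** (mat2 (-r) 0 0 (inverse (-r)) ** mat2 1 (s/r) 0 1))"
      unfolding g wmat_def mat2_mult mat2_eq_iff
      using False det by (simp add: inverse_eq_divide) (simp add: field_simps)
    then show thesis using that(2) False by (metis neg_equal_0_iff_equal)
  qed
qed

definition additive_subgroup :: "'v::ab_group_add set \<Rightarrow> bool" where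
  "additive_subgroup H \<longleftrightarrow> 0 \<in> H \<and> (\<forall>x\<in>H. \<forall>y\<in>H. x - y \<in> H)"

lemma additive_subgroup_gen_subgroup: "additive_subgroup (gen_subgroup S)"
  by (auto simp: additive_subgroup_def gen_subgroup_def)

lemma gen_subgroup_least: "additive_subgroup H \<Longrightarrow> S \<subseteq> H \<Longrightarrow> gen_subgroup S \<subseteq> H"
  by (auto simp: additive_subgroup_def gen_subgroup_def)

lemma gen_subgroup_invariant:
  assumes f_diff: "\<And>x y. f (x - y) = f x - f y" and "f ` S \<subseteq> S"
  shows "f ` gen_subgroup S \<subseteq> gen_subgroup S"
proof -
  let ?H = "{x. f x \<in> gen_subgroup S}"
  have "f 0 = 0" using f_diff[of 0 0] by simp
  then have "additive_subgroup ?H"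
    using additive_subgroup_gen_subgroup[of S] by (auto simp: additive_subgroup_def f_diff)
  moreover have "S \<subseteq> gen_subgroup S"
    by (auto simp: gen_subgroup_def)
  then have "S \<subseteq> ?H" using assms(2) by blast
  ultimately have "gen_subgroup S \<subseteq> ?H" by (rule gen_subgroup_least)
  then show ?thesis by blast
qed

locale SL2_mod =
  fixes act :: "'k::field^2^2 \<Rightarrow> 'v::ab_group_add \<Rightarrow> 'v"
  assumes SL2_module: "SL2_module act"
begin

abbreviation Z :: "nat \<Rightarrow> 'v set" where
  "Z k \<equiv> Zser act UNIV k"

lemma act_mult: "g \<in> SL2 \<Longrightarrow> h \<in> SL2 \<Longrightarrow> act (g ** h) x = act g (act h x)"
  using SL2_module by (simp add: SL2_module_def)

lemma act_add: "g \<in> SL2 \<Longrightarrow> act g (x + y) = act g x + act g y"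
  using SL2_module by (simp add: SL2_module_def)

lemma act_diff: "g \<in> SL2 \<Longrightarrow> act g (x - y) = act g x - act g y"
  using act_add[of g "x - y" y] by (simp add: eq_diff_eq)

lemma act_zero: "g \<in> SL2 \<Longrightarrow> act g 0 = 0"
  using act_diff[of g 0 0] by simp

lemma additive_subgroup_Zser:
  assumes "additive_subgroup M"
  shows "additive_subgroup (Zser act M k)"
proof (induction k)
  case 0
  then show ?case by (simp add: additive_subgroup_def)
next
  case (Suc k)
  have "act u (x - y) - (x - y) \<in> Zser act M k"
    if "u \<in> Ugrp" "act u x - x \<in> Zser act M k" "act u y - y \<in> Zser act M k" for u x y
  proof -
    have "act u (x - y) - (x - y) = (act u x - x) - (act u y - y)"
      using act_diff[OF Ugrp_subset_SL2[OF that(1)]] by (simp add: algebra_simps)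
    with Suc that(2,3) show ?thesis unfolding additive_subgroup_def by metis
  qed
  moreover have "act u 0 - 0 \<in> Zser act M k" if "u \<in> Ugrp" for u
    using Suc that by (simp add: additive_subgroup_def act_zero Ugrp_subset_SL2)
  ultimately show ?case
    using assms by (simp add: additive_subgroup_def)
qed

lemma additive_subgroup_Z: "additive_subgroup (Z k)"
  by (rule additive_subgroup_Zser) (simp add: additive_subgroup_def)

lemma Z_Suc_mono: "Z k \<subseteq> Z (Suc k)"
proof (induction k)
  case 0
  then show ?case by (auto simp: act_zero Ugrp_subset_SL2)
next
  case (Suc k)
  then show ?case by auto
qed

lemma Z_mono: "k \<le> m \<Longrightarrow> Z k \<subseteq> Z m"
  by (rule lift_Suc_mono_le[of Z, OF Z_Suc_mono])

lemma Z_invariant_upper_triangular: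
  assumes "a \<noteq> 0" and "x \<in> Z k"
  shows "act (mat2 a b 0 (inverse a)) x \<in> Z k"
  using assms(2)
proof (induction k arbitrary: x)
  case 0
  then show ?case by (simp add: act_zero upper_triangular_in_SL2 assms(1))
next
  case (Suc k)
  let ?b = "mat2 a b 0 (inverse a)"
  have b: "?b \<in> SL2" by (rule upper_triangular_in_SL2[OF assms(1)])
  have "act u (act ?b x) - act ?b x \<in> Z k" if u: "u \<in> Ugrp" for u
  proof -
    obtain u' where u': "u' \<in> Ugrp" "u ** ?b = ?b ** u'"
      using upper_triangular_normalizes_Ugrp[OF assms(1) u] by blast
    have "act u (act ?b x) - act ?b x = act ?b (act u' x - x)"
      using act_mult[OF Ugrp_subset_SL2[OF u] b] act_mult[OF b Ugrp_subset_SL2[OF u'(1)]] u'(2)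
      by (simp add: act_diff[OF b])
    then show ?thesis using Suc u' by simp
  qed
  then show ?case by simp
qed

lemma Z_invariant_Ugrp: "u \<in> Ugrp \<Longrightarrow> x \<in> Z k \<Longrightarrow> act u x \<in> Z k"
  using Z_invariant_upper_triangular[of 1 x k] by (auto simp: Ugrp_def)

lemma translate_Z1_inter_wmat_Z:
  assumes g: "g \<in> SL2" and x: "x \<in> Z 1 \<inter> act wmat ` Z m"
  shows "act g x \<in> Z m"
proof -
  obtain y where y: "y \<in> Z m" and xy: "x = act wmat y" using x by blast
  have fixed: "act u x = x" if "u \<in> Ugrp" for u
    using x that by simp
  from g show ?thesis
  proof (cases rule: SL2_Bruhat_cases)
    case (1 a b)
    have "act g x \<in> Z 1"
      using Z_invariant_upper_triangular[OF 1(1)] x 1(2) by blast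
    moreover have "m = 0 \<Longrightarrow> x = 0"
      using y xy act_zero[OF wmat_in_SL2] by simp
    ultimately show ?thesis using Z_mono[of 1 m] act_zero[OF g]
      by (cases "m = 0") auto
  next
    case (2 a l l')
    let ?u = "mat2 1 l 0 1" and ?u' = "mat2 1 l' 0 1"
      and ?t = "mat2 a 0 0 (inverse a)" and ?t' = "mat2 (inverse a) 0 0 (inverse (inverse a))"
      and ?neg = "mat2 (-1) 0 0 (inverse (-1::'k))"
    have U: "?u \<in> Ugrp" "?u' \<in> Ugrp" by (auto simp: Ugrp_def)
    have S: "?t \<in> SL2" "?t' \<in> SL2" "?neg \<in> SL2" "?u \<in> SL2" "?u' \<in> SL2"
      using 2(1) U by (simp_all add: mat2_in_SL2_iff Ugrp_subset_SL2)
    have "act g x = act ?u (act wmat (act ?t (act ?u' x)))"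
      using 2(2) S wmat_in_SL2 by (metis act_mult SL2_mult)
    also have "act ?u' x = x" by (rule fixed[OF U(2)])
    also have "act ?t x = act wmat (act ?t' y)"
      using xy S wmat_in_SL2 by (metis act_mult wmat_mult_diag[OF 2(1)])
    also have "act wmat (act wmat (act ?t' y)) = act ?neg (act ?t' y)"
      using S wmat_in_SL2 by (metis act_mult wmat_squared)
    finally have gx: "act g x = act ?u (act ?neg (act ?t' y))" .
    have "act ?t' y \<in> Z m"
      using Z_invariant_upper_triangular[of "inverse a" y m] 2(1) y by simp
    then have "act ?neg (act ?t' y) \<in> Z m"
      using Z_invariant_upper_triangular[of "-1"] by simp
    then show ?thesis unfolding gx by (rule Z_invariant_Ugrp[OF U(1)])
  qed
qed

lemma act_image_SL2_orbits:
  assumes "h \<in> SL2"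
  shows "act h ` (\<Union>g\<in>SL2. act g ` S) \<subseteq> (\<Union>g\<in>SL2. act g ` S)"
proof
  fix z assume "z \<in> act h ` (\<Union>g\<in>SL2. act g ` S)"
  then obtain g x where g: "g \<in> SL2" and x: "x \<in> S" and z: "z = act h (act g x)"
    by blast
  have "z = act (h ** g) x" and "h ** g \<in> SL2"
    using assms g z by (simp_all add: act_mult SL2_mult)
  then show "z \<in> (\<Union>g\<in>SL2. act g ` S)"
    using x by blast
qed

lemma Zser_subgroup_eq:
  assumes W: "additive_subgroup W"
    and W_Ugrp: "\<And>u x. u \<in> Ugrp \<Longrightarrow> x \<in> W \<Longrightarrow> act u x \<in> W"
  shows "Zser act W k = W \<inter> Z k"
proof (induction k)
  case 0
  then show ?case using W by (auto simp: additive_subgroup_def)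
next
  case (Suc k)
  have "act u x - x \<in> W" if "u \<in> Ugrp" "x \<in> W" for u x
    using W W_Ugrp[OF that] that(2) by (simp add: additive_subgroup_def)
  then show ?case by (auto simp: Suc)
qed

end

theorem mainTheorem8:
  fixes act :: "'k::field^2^2 \<Rightarrow> 'v::ab_group_add \<Rightarrow> 'v"
    and n :: nat
  assumes "SL2_module act"
    and "Zser act UNIV n = UNIV"
    and "\<forall>k<n. Zser act UNIV k \<noteq> UNIV"
  defines "W \<equiv> gen_subgroup (\<Union>g\<in>SL2. act g ` (Zser act UNIV 1 \<inter> act wmat ` Zser act UNIV (n - 1)))"
  shows "(\<exists>k\<le>n - 1. Zser act W k = W) \<and> W \<subseteq> Zser act UNIV (n - 1)"
proof -
  interpret SL2_mod act by standard (rule assms(1))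
  define T where "T = (\<Union>g\<in>SL2. act g ` (Z 1 \<inter> act wmat ` Z (n - 1)))"
  have "T \<subseteq> Z (n - 1)"
    unfolding T_def using translate_Z1_inter_wmat_Z by blast
  then have W_Z: "W \<subseteq> Z (n - 1)"
    unfolding W_def T_def[symmetric]
    by (intro gen_subgroup_least additive_subgroup_Z)
  have "act h ` T \<subseteq> T" if "h \<in> SL2" for h
    unfolding T_def using that by (rule act_image_SL2_orbits)
  then have "act h ` W \<subseteq> W" if "h \<in> SL2" for h
    unfolding W_def T_def[symmetric] using that by (simp add: gen_subgroup_invariant act_diff)
  then have "Zser act W (n - 1) = W \<inter> Z (n - 1)"
    using Zser_subgroup_eq[of W] additive_subgroup_gen_subgroup Ugrp_subset_SL2
    unfolding W_def by blast
  then show ?thesis using W_Z by auto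
qed

end
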